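(* There is a set $E\subset[0,1]$ with $\dim_H(E)=0$ such that for every irrational $x\in[0,1]\setminus E$ the sequence $(g_k(x))_{k\in\mathbb{N}}$ of $\bar O^1$-symbols of $x$ is unbounded.
   Context: Every irrational $x\in(0,1)$ has a unique representation ($\bar O^1$-expansion) $$x=\sum_{k=1}^\infty\frac{(-1)^{k-1}}{g_1(g_1+g_2)\cdots(g_1+g_2+\dots+g_k)},\qquad g_k=g_k(x)\in\mathbb{N}=\{1,2,3,\dots\}.$$ The numbers $g_k(x)$ are called the $\bar O^1$-symbols of $x$. $\dim_H$ denotes Hausdorff dimension. *)

theory Defs
  imports "HOL-Analysis.Analysis"
begin

definition hd_term :: "real \<Rightarrow> real set \<Rightarrow> ennreal" where
  "hd_term s A = (if A = {} then 0 else if s = 0 then 1 else ennreal (diameter A powr s))"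

definition hausdorff_pre :: "real \<Rightarrow> real \<Rightarrow> real set \<Rightarrow> ennreal" where
  "hausdorff_pre s \<delta> E =
     (INF U \<in> {U :: nat \<Rightarrow> real set. E \<subseteq> (\<Union>i. U i) \<and> (\<forall>i. bounded (U i) \<and> diameter (U i) \<le> \<delta>)}.
        (\<Sum>i. hd_term s (U i)))"

definition hausdorff_measure :: "real \<Rightarrow> real set \<Rightarrow> ennreal" where
  "hausdorff_measure s E = (SUP \<delta> \<in> {0<..}. hausdorff_pre s \<delta> E)"

definition hausdorff_dim :: "real set \<Rightarrow> ereal" where
  "hausdorff_dim E = Inf {ereal s | s. s \<ge> 0 \<and> hausdorff_measure s E = 0}"

text \<open>The O-bar-1 expansion; the symbols are indexed from 0, i.e. g 0 = g_1, g 1 = g_2, ...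
  The k-th term (k from 0) is (-1)^k / ((g_1)(g_1+g_2)...(g_1+...+g_{k+1})).\<close>

definition obar_expansion :: "real \<Rightarrow> (nat \<Rightarrow> nat) \<Rightarrow> bool" where
  "obar_expansion x g \<longleftrightarrow> (\<forall>k. g k \<ge> 1) \<and>
     (\<lambda>k. (-1) ^ k / (\<Prod>j\<le>k. real (\<Sum>i\<le>j. g i))) sums x"

end

theory Submission
  imports Defs
begin

text \<open>Bounded symbols make the set small: if all symbols of \<open>x\<close> are at most \<open>M\<close>, then
  the first \<open>2m+1\<close> symbols pin \<open>x\<close> between two consecutive partial sums of its
  alternating expansion, an interval of length at most \<open>1 / (2m+1)!\<close>, because the
  \<open>k\<close>-th denominator is at least \<open>(k+1)!\<close>. So the points with symbols bounded by \<open>M\<close>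
  are covered by \<open>M ^ (2m+1)\<close> intervals of that length, and \<open>M ^ n / (n!) ^ s \<rightarrow> 0\<close>
  for every \<open>s > 0\<close>. Taking the countable union over \<open>M\<close>, the set of points with
  a bounded symbol sequence has Hausdorff dimension \<open>0\<close>.\<close>

lemma hausdorff_pre_mono: "X \<subseteq> Y \<Longrightarrow> hausdorff_pre s \<delta> X \<le> hausdorff_pre s \<delta> Y"
  unfolding hausdorff_pre_def by (rule INF_superset_mono) auto

lemma hd_term_le_powr:
  assumes "0 < s" "bounded U" "diameter U \<le> r"
  shows "hd_term s U \<le> ennreal (r powr s)"
proof (cases "U = {}")
  case False
  have "diameter U powr s \<le> r powr s"
    using assms diameter_ge_0[OF assms(2)] by (intro powr_mono2) auto
  with False assms(1) show ?thesis by (simp add: hd_term_def ennreal_leI)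
qed (simp add: hd_term_def)

lemma hausdorff_pre_le_finite_cover:
  fixes C :: "'a \<Rightarrow> real set"
  assumes "0 < s" "finite I" "E \<subseteq> (\<Union>i\<in>I. C i)" "0 \<le> r" "r \<le> \<delta>"
    and C: "\<And>i. i \<in> I \<Longrightarrow> bounded (C i) \<and> diameter (C i) \<le> r"
  shows "hausdorff_pre s \<delta> E \<le> ennreal (real (card I) * r powr s)"
proof -
  obtain h where h: "bij_betw h {..<card I} I"
    using ex_bij_betw_nat_finite[OF \<open>finite I\<close>] atLeast0LessThan by auto
  define U where "U n = (if n < card I then C (h n) else {})" for n
  have "E \<subseteq> (\<Union>n. U n)"
  proof
    fix x assume "x \<in> E"
    then obtain i where "i \<in> I" "x \<in> C i" using assms(3) by blast
    moreover obtain n where "n < card I" "i = h n"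
      using h \<open>i \<in> I\<close> unfolding bij_betw_def by auto
    ultimately show "x \<in> (\<Union>n. U n)" unfolding U_def by auto
  qed
  moreover have "bounded (U n) \<and> diameter (U n) \<le> \<delta>" for n
    using C[of "h n"] bij_betwE[OF h] assms(4,5) unfolding U_def by auto
  ultimately have "hausdorff_pre s \<delta> E \<le> (\<Sum>n. hd_term s (U n))"
    unfolding hausdorff_pre_def by (intro INF_lower) auto
  also have "\<dots> = (\<Sum>n<card I. hd_term s (C (h n)))"
    by (subst suminf_finite[of "{..<card I}"]) (auto simp: U_def hd_term_def)
  also have "\<dots> = (\<Sum>i\<in>I. hd_term s (C i))"
    using sum.reindex_bij_betw[OF h] by simp
  also have "\<dots> \<le> (\<Sum>i\<in>I. ennreal (r powr s))"
    using C assms(1) by (intro sum_mono hd_term_le_powr) auto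
  also have "\<dots> = ennreal (real (card I) * r powr s)"
    by (simp add: sum_ennreal[symmetric] ennreal_of_nat_eq_real_of_nat ennreal_mult)
  finally show ?thesis .
qed

lemma hausdorff_dim_eq_0I:
  assumes "\<And>s. 0 < s \<Longrightarrow> hausdorff_measure s E = 0"
  shows "hausdorff_dim E = 0"
proof -
  let ?D = "{ereal s | s. s \<ge> 0 \<and> hausdorff_measure s E = 0}"
  have le: "Inf ?D \<le> ereal s" if "0 < s" for s
    using assms[OF that] that by (intro Inf_lower) auto
  have "Inf ?D \<le> 0"
  proof (rule ccontr)
    assume "\<not> Inf ?D \<le> 0"
    then obtain r where "0 < ereal r" "ereal r < Inf ?D"
      using ereal_dense2 by (meson dense not_le)
    then show False using le[of r] by auto
  qed
  moreover have "0 \<le> Inf ?D" by (rule Inf_greatest) auto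
  ultimately show ?thesis unfolding hausdorff_dim_def by simp
qed

lemma hausdorff_pre_UN_eq_0:
  fixes B :: "nat \<Rightarrow> real set"
  assumes B: "\<And>n. hausdorff_pre s \<delta> (B n) = 0"
  shows "hausdorff_pre s \<delta> (\<Union>n. B n) = 0"
proof -
  define Cov where "Cov X = {U :: nat \<Rightarrow> real set.
    X \<subseteq> (\<Union>i. U i) \<and> (\<forall>i. bounded (U i) \<and> diameter (U i) \<le> \<delta>)}" for X
  have pre: "hausdorff_pre s \<delta> X = (INF U\<in>Cov X. (\<Sum>i. hd_term s (U i)))" for X
    unfolding hausdorff_pre_def Cov_def ..
  have small: "hausdorff_pre s \<delta> (\<Union>n. B n) \<le> ennreal e" if "0 < e" for e
  proof -
    define \<epsilon> :: "nat \<Rightarrow> real" where "\<epsilon> = (\<lambda>n. e * (1/2) ^ Suc n)"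
    have "\<exists>U \<in> Cov (B n). (\<Sum>i. hd_term s (U i)) < ennreal (\<epsilon> n)" for n
    proof -
      have "(INF U\<in>Cov (B n). (\<Sum>i. hd_term s (U i))) < ennreal (\<epsilon> n)"
        using B[of n] \<open>0 < e\<close> unfolding pre \<epsilon>_def by simp
      then show ?thesis unfolding INF_less_iff .
    qed
    then obtain C where C: "\<And>n. C n \<in> Cov (B n)" "\<And>n. (\<Sum>i. hd_term s (C n i)) < ennreal (\<epsilon> n)"
      by metis
    define V where "V i = C (fst (prod_decode i)) (snd (prod_decode i))" for i
    have "V \<in> Cov (\<Union>n. B n)"
    proof -
      have "x \<in> (\<Union>i. V i)" if "x \<in> B n" for x n
      proof -
        obtain j where "x \<in> C n j" using C(1)[of n] \<open>x \<in> B n\<close> unfolding Cov_def by blast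
        then have "x \<in> V (prod_encode (n, j))" unfolding V_def by simp
        then show ?thesis by blast
      qed
      moreover have "bounded (V i) \<and> diameter (V i) \<le> \<delta>" for i
        using C(1)[of "fst (prod_decode i)"] unfolding Cov_def V_def by blast
      ultimately show ?thesis unfolding Cov_def by blast
    qed
    then have "hausdorff_pre s \<delta> (\<Union>n. B n) \<le> (\<Sum>i. hd_term s (V i))"
      unfolding pre by (rule INF_lower)
    also have "\<dots> = (\<Sum>n. \<Sum>j. hd_term s (C n j))"
      unfolding V_def
      using suminf_ennreal_2dimen[of "\<lambda>n. \<Sum>j. hd_term s (C n j)" "\<lambda>(n, j). hd_term s (C n j)"]
      by (simp add: case_prod_beta)
    also have "\<dots> \<le> (\<Sum>n. ennreal (\<epsilon> n))"
      using C(2) by (intro suminf_le) (auto intro: less_imp_le)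
    also have "\<dots> = ennreal e"
    proof -
      have sums: "\<epsilon> sums e"
        using sums_mult[OF power_half_series, of e] by (simp add: \<epsilon>_def)
      have "(\<Sum>n. ennreal (\<epsilon> n)) = ennreal (\<Sum>n. \<epsilon> n)"
        using \<open>0 < e\<close> sums_summable[OF sums] by (intro suminf_ennreal2) (auto simp: \<epsilon>_def)
      then show ?thesis using sums_unique[OF sums] by simp
    qed
    finally show ?thesis .
  qed
  have "hausdorff_pre s \<delta> (\<Union>n. B n) \<le> 0"
  proof (rule ennreal_le_epsilon)
    show "hausdorff_pre s \<delta> (\<Union>n. B n) \<le> 0 + ennreal e" if "0 < e" for e
      using small[OF that] by simp
  qed
  then show ?thesis by simp
qed

lemma power_div_fact_powr_LIMSEQ_0:
  fixes c s :: real
  assumes "0 \<le> c" "0 < s"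
  shows "(\<lambda>n. c ^ n / fact n powr s) \<longlonglongrightarrow> 0"
proof -
  define b where "b = c powr (1/s)"
  have "(\<lambda>n. inverse (fact n) * b ^ n) \<longlonglongrightarrow> 0"
    by (rule summable_LIMSEQ_zero[OF summable_exp])
  then have "(\<lambda>n. (b ^ n / fact n) powr s) \<longlonglongrightarrow> 0"
    using assms(2) by (intro tendsto_zero_powrI) (auto simp: b_def divide_inverse mult.commute)
  moreover have "(b ^ n) powr s = c ^ n" for n
    using assms by (induction n) (simp_all add: b_def powr_mult powr_powr)
  then have "(b ^ n / fact n) powr s = c ^ n / fact n powr s" for n
    by (simp add: b_def powr_divide)
  ultimately show ?thesis by simp
qed

definition obar_denom :: "(nat \<Rightarrow> nat) \<Rightarrow> nat \<Rightarrow> real" where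
  "obar_denom g k = (\<Prod>j\<le>k. real (\<Sum>i\<le>j. g i))"

definition obar_partial_sum :: "(nat \<Rightarrow> nat) \<Rightarrow> nat \<Rightarrow> real" where
  "obar_partial_sum g n = (\<Sum>k<n. (-1) ^ k / obar_denom g k)"

lemma obar_denom_Suc: "obar_denom g (Suc k) = obar_denom g k * real (\<Sum>i\<le>Suc k. g i)"
  unfolding obar_denom_def by (simp add: prod.atMost_Suc)

lemma Suc_le_sum_atMost:
  fixes g :: "nat \<Rightarrow> nat"
  assumes "\<forall>i\<le>j. 1 \<le> g i"
  shows "Suc j \<le> (\<Sum>i\<le>j. g i)"
proof -
  have "(\<Sum>i\<le>j. 1) \<le> (\<Sum>i\<le>j. g i)" by (rule sum_mono) (use assms in auto)
  then show ?thesis by simp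
qed

lemma fact_le_obar_denom:
  assumes "\<forall>i\<le>k. 1 \<le> g i"
  shows "fact (Suc k) \<le> obar_denom g k"
  using assms
proof (induction k)
  case 0
  then show ?case by (simp add: obar_denom_def)
next
  case (Suc k)
  then have IH: "fact (Suc k) \<le> obar_denom g k" by simp
  have "real (Suc (Suc k)) \<le> real (\<Sum>i\<le>Suc k. g i)"
    using Suc_le_sum_atMost[OF Suc.prems] by linarith
  moreover have "0 \<le> obar_denom g k" using IH fact_ge_zero order_trans by blast
  ultimately have "fact (Suc k) * real (Suc (Suc k)) \<le> obar_denom g k * real (\<Sum>i\<le>Suc k. g i)"
    using IH by (intro mult_mono) auto
  then show ?case by (simp add: obar_denom_Suc algebra_simps)
qed

lemma obar_denom_pos: "\<forall>i\<le>k. 1 \<le> g i \<Longrightarrow> 0 < obar_denom g k"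
  by (metis fact_le_obar_denom fact_gt_zero order_less_le_trans)

lemma obar_denom_mono_Suc:
  assumes "\<forall>i. 1 \<le> g i"
  shows "obar_denom g k \<le> obar_denom g (Suc k)"
proof -
  have "1 \<le> (\<Sum>i\<le>Suc k. g i)" using Suc_le_sum_atMost[of "Suc k" g] assms by simp
  then have "1 \<le> real (\<Sum>i\<le>Suc k. g i)" by linarith
  then show ?thesis
    using obar_denom_pos[of k g] assms by (simp add: obar_denom_Suc mult_le_cancel_left1)
qed

lemma inverse_obar_denom_LIMSEQ_0:
  assumes "\<forall>i. 1 \<le> g i"
  shows "(\<lambda>k. 1 / obar_denom g k) \<longlonglongrightarrow> 0"
proof (rule Lim_null_comparison[OF _ LIMSEQ_inverse_real_of_nat])
  show "\<forall>\<^sub>F k in sequentially. norm (1 / obar_denom g k) \<le> inverse (real (Suc k))"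
  proof (intro always_eventually allI)
    fix k
    have "real (Suc k) \<le> obar_denom g k"
      using fact_le_obar_denom[of k g] fact_ge_self[of "Suc k"] assms
      by (metis of_nat_fact of_nat_le_iff order_trans)
    then show "norm (1 / obar_denom g k) \<le> inverse (real (Suc k))"
      by (simp add: divide_inverse le_imp_inverse_le)
  qed
qed

lemma obar_expansion_between_partial_sums:
  assumes "obar_expansion x g"
  shows "obar_partial_sum g (2*m) \<le> x" and "x \<le> obar_partial_sum g (2*m+1)"
proof -
  have g: "\<forall>i. 1 \<le> g i" using assms unfolding obar_expansion_def by simp
  have "(\<lambda>k. (-1) ^ k * (1 / obar_denom g k)) sums x"
    using assms unfolding obar_expansion_def obar_denom_def by simp
  then have x: "x = (\<Sum>k. (-1) ^ k * (1 / obar_denom g k))" by (simp add: sums_unique)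
  note Leibniz = summable_Leibniz'[OF inverse_obar_denom_LIMSEQ_0[OF g]]
  have pos: "0 \<le> 1 / obar_denom g k" for k using obar_denom_pos[of k g] g by simp
  have mono: "1 / obar_denom g (Suc k) \<le> 1 / obar_denom g k" for k
    using obar_denom_pos[of k g] obar_denom_mono_Suc[OF g, of k] g by (simp add: frac_le)
  show "obar_partial_sum g (2*m) \<le> x" "x \<le> obar_partial_sum g (2*m+1)"
    using Leibniz(2,4)[OF pos mono, of m] unfolding x obar_partial_sum_def by simp_all
qed

lemma obar_partial_sum_cong:
  assumes "\<forall>i<n. p i = g i"
  shows "obar_partial_sum p n = obar_partial_sum g n"
  unfolding obar_partial_sum_def obar_denom_def using assms
  by (intro sum.cong refl arg_cong[where f="\<lambda>d. _ / d"] prod.cong arg_cong[where f=real]) auto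

lemma obar_partial_sum_Suc_diff:
  "obar_partial_sum g (Suc n) - obar_partial_sum g n = (-1) ^ n / obar_denom g n"
  unfolding obar_partial_sum_def by simp

definition obar_bounded_symbols :: "nat \<Rightarrow> real set" where
  "obar_bounded_symbols M = {x. \<exists>g. obar_expansion x g \<and> (\<forall>k. g k \<le> M)}"

lemma obar_partial_sum_odd_bounds:
  assumes "\<forall>i\<le>2*m. 1 \<le> p i"
  shows "obar_partial_sum p (2*m) \<le> obar_partial_sum p (2*m+1)"
    and "obar_partial_sum p (2*m+1) - obar_partial_sum p (2*m) \<le> 1 / fact (2*m+1)"
proof -
  have diff: "obar_partial_sum p (2*m+1) - obar_partial_sum p (2*m) = 1 / obar_denom p (2*m)"
    using obar_partial_sum_Suc_diff[of p "2*m"] by simp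
  moreover have "0 < 1 / obar_denom p (2*m)" using obar_denom_pos[OF assms] by simp
  ultimately show "obar_partial_sum p (2*m) \<le> obar_partial_sum p (2*m+1)" by linarith
  show "obar_partial_sum p (2*m+1) - obar_partial_sum p (2*m) \<le> 1 / fact (2*m+1)"
    unfolding diff using fact_le_obar_denom[OF assms] by (simp add: frac_le)
qed

lemma obar_bounded_symbols_subset_cylinders:
  "obar_bounded_symbols M \<subseteq>
     (\<Union>p \<in> PiE {..2*m} (\<lambda>_. {1..M}). {obar_partial_sum p (2*m) .. obar_partial_sum p (2*m+1)})"
proof
  fix x assume "x \<in> obar_bounded_symbols M"
  then obtain g where g: "obar_expansion x g" "\<forall>k. g k \<le> M"
    unfolding obar_bounded_symbols_def by blast
  define p where "p = restrict g {..2*m}"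
  have "p \<in> PiE {..2*m} (\<lambda>_. {1..M})"
    using g unfolding p_def obar_expansion_def by auto
  moreover have "obar_partial_sum p n = obar_partial_sum g n" if "n \<le> 2*m+1" for n
    using that by (intro obar_partial_sum_cong) (auto simp: p_def)
  then have "x \<in> {obar_partial_sum p (2*m) .. obar_partial_sum p (2*m+1)}"
    using obar_expansion_between_partial_sums[OF g(1), of m] by simp
  ultimately show "x \<in> (\<Union>p \<in> PiE {..2*m} (\<lambda>_. {1..M}).
      {obar_partial_sum p (2*m) .. obar_partial_sum p (2*m+1)})"
    by blast
qed

lemma hausdorff_pre_obar_bounded_symbols:
  assumes "0 < s" "0 < \<delta>"
  shows "hausdorff_pre s \<delta> (obar_bounded_symbols M) = 0"
proof -
  have "hausdorff_pre s \<delta> (obar_bounded_symbols M) \<le> 0 + ennreal e" if "0 < e" for e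
  proof -
    have "\<forall>\<^sub>F n in sequentially. real M ^ n / fact n powr s < e \<and> 1 ^ n / fact n powr 1 < \<delta>"
      using assms that
      by (intro eventually_conj order_tendstoD(2)[OF power_div_fact_powr_LIMSEQ_0]) auto
    then obtain m where "\<And>n. m \<le> n \<Longrightarrow> real M ^ n / fact n powr s < e \<and> 1 ^ n / fact n powr 1 < \<delta>"
      unfolding eventually_sequentially by blast
    from this[of "2*m+1"]
    have m: "real M ^ (2*m+1) / fact (2*m+1) powr s < e" "1 / fact (2*m+1) < \<delta>"
      by simp_all
    define I where "I = PiE {..2*m} (\<lambda>_. {1..M})"
    have "hausdorff_pre s \<delta> (obar_bounded_symbols M)
        \<le> ennreal (real (card I) * (1 / fact (2*m+1)) powr s)"
    proof (rule hausdorff_pre_le_finite_cover[OF \<open>0 < s\<close> _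
          obar_bounded_symbols_subset_cylinders[of M m, folded I_def]])
      fix p assume "p \<in> I"
      then have "\<forall>i\<le>2*m. 1 \<le> p i" by (auto simp: I_def PiE_iff)
      then show "bounded {obar_partial_sum p (2*m) .. obar_partial_sum p (2*m+1)} \<and>
          diameter {obar_partial_sum p (2*m) .. obar_partial_sum p (2*m+1)} \<le> 1 / fact (2*m+1)"
        using obar_partial_sum_odd_bounds by simp
    qed (use m(2) in \<open>auto simp: I_def finite_PiE\<close>)
    also have "real (card I) * (1 / fact (2*m+1)) powr s = real M ^ (2*m+1) / fact (2*m+1) powr s"
      by (simp add: I_def card_PiE powr_divide)
    finally show ?thesis using m(1) by (simp add: ennreal_leI order_trans)
  qed
  then have "hausdorff_pre s \<delta> (obar_bounded_symbols M) \<le> 0"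
    by (rule ennreal_le_epsilon)
  then show ?thesis by simp
qed

theorem corollary2:
  shows "\<exists>E \<subseteq> {0..1::real}. hausdorff_dim E = 0 \<and>
           (\<forall>x \<in> {0..1} - E. x \<notin> \<rat> \<longrightarrow>
              (\<forall>g. obar_expansion x g \<longrightarrow> \<not> bdd_above (range g)))"
proof -
  define E where "E = {x \<in> {0..1::real}. \<exists>g. obar_expansion x g \<and> bdd_above (range g)}"
  have "E \<subseteq> (\<Union>M. obar_bounded_symbols M)"
  proof
    fix x assume "x \<in> E"
    then obtain g where g: "obar_expansion x g" "bdd_above (range g)"
      unfolding E_def by blast
    then obtain M where "\<forall>k. g k \<le> M"
      by (auto simp: bdd_above_def)
    then show "x \<in> (\<Union>M. obar_bounded_symbols M)"
      using g(1) unfolding obar_bounded_symbols_def by blast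
  qed
  then have "hausdorff_pre s \<delta> E \<le> hausdorff_pre s \<delta> (\<Union>M. obar_bounded_symbols M)" for s \<delta>
    by (rule hausdorff_pre_mono)
  moreover have "hausdorff_pre s \<delta> (\<Union>M. obar_bounded_symbols M) = 0" if "0 < s" "0 < \<delta>" for s \<delta>
    by (rule hausdorff_pre_UN_eq_0) (rule hausdorff_pre_obar_bounded_symbols[OF that])
  ultimately have "hausdorff_pre s \<delta> E = 0" if "0 < s" "0 < \<delta>" for s \<delta>
    using that by (metis le_zero_eq)
  then have "hausdorff_measure s E = 0" if "0 < s" for s
    using that by (simp add: hausdorff_measure_def)
  then have "hausdorff_dim E = 0" by (rule hausdorff_dim_eq_0I)
  moreover have "E \<subseteq> {0..1}" by (auto simp: E_def)
  moreover have "\<forall>x \<in> {0..1} - E. x \<notin> \<rat> \<longrightarrow> (\<forall>g. obar_expansion x g \<longrightarrow> \<not> bdd_above (range g))"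
    by (auto simp: E_def)
  ultimately show ?thesis by blast
qed

end
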